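(* The multiplication map $\widetilde{\mathrm{Sym}}\otimes\big(\mathrm{NSym}\,\square_{\mathrm{Sym}}\,\mathbb{Z}\big)\to\mathrm{NSym}$ is an isomorphism.
   Context: $\mathrm{NSym}=\mathbb{Z}\langle Z_1,Z_2,\ldots\rangle$ is the free associative algebra (non-commutative symmetric functions) with coproduct $\Delta Z_n=\sum_{p+q=n}Z_p\otimes Z_q$ ($Z_0=1$); $\mathrm{Sym}=\mathbb{Z}[Z_1,Z_2,\ldots]$ is its abelianization with projection $\pi\colon\mathrm{NSym}\to\mathrm{Sym}$. The cotensor product is $\mathrm{NSym}\,\square_{\mathrm{Sym}}\,\mathbb{Z}=\{n\in\mathrm{NSym}:(\mathrm{id}\otimes\pi)\Delta n=n\otimes1\}$. $\widetilde{\mathrm{Sym}}\subset\mathrm{NSym}$ is the $\mathbb{Z}$-span of the monomials $Z_{i_1}^{a_1}\cdots Z_{i_n}^{a_n}$ with $i_1\le\cdots\le i_n$. The tensor product is over $\mathbb{Z}$. *)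

theory Defs
  imports Main "HOL-Library.Multiset"
begin

text \<open>
  Model of NSym = Z<Z_1,Z_2,...>: an element is a finitely supported function from words
  (lists of letters) to integers; the word [i1,...,ik] stands for the monomial Z_i1 ... Z_ik.
\<close>

definition supp :: "('a \<Rightarrow> 'b::zero) \<Rightarrow> 'a set" where
  "supp f = {x. f x \<noteq> 0}"

definition nsym :: "(nat list \<Rightarrow> int) set" where
  "nsym = {x. finite (supp x) \<and> (\<forall>w. x w \<noteq> 0 \<longrightarrow> 0 \<notin> set w)}"

definition nmult :: "(nat list \<Rightarrow> int) \<Rightarrow> (nat list \<Rightarrow> int) \<Rightarrow> (nat list \<Rightarrow> int)" where
  "nmult x y = (\<lambda>w. \<Sum>k\<le>length w. x (take k w) * y (drop k w))"

definition mono :: "nat list \<Rightarrow> (nat list \<Rightarrow> int)" where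
  "mono s = (\<lambda>w. if w = s then 1 else 0)"

text \<open>
  Terms of the coproduct of a word w: Delta (Z_w1...Z_wk) = prod_j (sum_{p+q=w_j} Z_p (x) Z_q)
  with Z_0 = 1; the terms are indexed by pairs (p,q) of lists with p+q = w componentwise,
  and the term is (filter nonzero p) (x) (filter nonzero q).
\<close>
definition coprod_splits :: "nat list \<Rightarrow> (nat list \<times> nat list) set" where
  "coprod_splits w = {(p, q). length p = length w \<and> length q = length w \<and>
                        (\<forall>i<length w. p ! i + q ! i = w ! i)}"

text \<open>
  NSym (x) Sym is free on pairs (word, multiset of positive letters); the projection
  pi : NSym -> Sym sends a word to its multiset of letters.  (id (x) pi) Delta x is the
  function below, giving the coefficient of u (x) m.
\<close>
definition id_pi_coprod :: "(nat list \<Rightarrow> int) \<Rightarrow> (nat list \<times> nat multiset \<Rightarrow> int)" where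
  "id_pi_coprod x = (\<lambda>(u, m). \<Sum>w\<in>supp x. x w *
       int (card {(p, q) \<in> coprod_splits w.
                     filter (\<lambda>i. i \<noteq> 0) p = u \<and> mset (filter (\<lambda>i. i \<noteq> 0) q) = m}))"

text \<open>Cotensor product NSym \<box>_Sym Z = {n. (id (x) pi) Delta n = n (x) 1}.\<close>
definition cotensor :: "(nat list \<Rightarrow> int) set" where
  "cotensor = {x \<in> nsym. \<forall>u m. id_pi_coprod x (u, m) = (if m = {#} then x u else 0)}"

text \<open>Basis of \<open>Sym~\<close>: monomials Z_i1^a1 ... Z_in^an with i1 <= ... <= in, i.e. sorted words.\<close>
definition symt_basis :: "nat list set" where
  "symt_basis = {w. sorted w \<and> 0 \<notin> set w}"

text \<open>
  Since \<open>Sym~\<close> is free on symt_basis, \<open>Sym~ \<otimes> C\<close> is identified with finitely supported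
  families (c_s) indexed by s in symt_basis with values in C; s (x) c corresponds to the
  family with c at s.
\<close>
definition symt_tensor_cotensor :: "(nat list \<Rightarrow> nat list \<Rightarrow> int) set" where
  "symt_tensor_cotensor = {f. finite {s. f s \<noteq> (\<lambda>_. 0)} \<and>
                               (\<forall>s. s \<notin> symt_basis \<longrightarrow> f s = (\<lambda>_. 0)) \<and>
                               (\<forall>s. f s \<in> cotensor)}"

definition mult_map :: "(nat list \<Rightarrow> nat list \<Rightarrow> int) \<Rightarrow> (nat list \<Rightarrow> int)" where
  "mult_map f = (\<lambda>w. \<Sum>s\<in>{s. f s \<noteq> (\<lambda>_. 0)}. nmult (mono s) (f s) w)"

end

theory Submission
  imports Defs
begin

text \<open>
  Write \<phi> = (id \<otimes> \<pi>)\<Delta> and C for the cotensor product. If s is a sorted word without zeros and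
  c \<in> C, then, since c is coinvariant, the part of \<phi>(s c) of Sym-degree at least deg s is
  exactly c \<otimes> \<pi>(s). Hence if (c_s) is a nonzero family, then at a word s of maximal degree
  with c_s \<noteq> 0 the component of \<phi>(\<Sigma> s c_s) at \<pi>(s) is c_s \<noteq> 0: the map is injective.
  Conversely, suppose \<phi>(x) has Sym-degree at most d. Coassociativity of \<Delta> together with
  cocommutativity of Sym shows that every top slice y_m = \<phi>(x)(-, m) with deg m = d lies in C,
  and x - \<Sigma>_{deg s = d} s y_{\<pi>(s)} has \<phi> of Sym-degree below d; induction on d gives
  surjectivity.
\<close>

section \<open>Sums over the terms of the coproduct\<close>

lemma coprod_splits_Nil: "coprod_splits [] = {([], [])}"
  by (auto simp: coprod_splits_def)

lemma coprod_splits_Cons: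
  "coprod_splits (a # w) = (\<lambda>(i, p, q). (i # p, (a - i) # q)) ` ({..a} \<times> coprod_splits w)"
proof (intro set_eqI iffI)
  fix x assume "x \<in> coprod_splits (a # w)"
  then obtain i p j q where "x = (i # p, j # q)" "length p = length w" "length q = length w"
    and "\<forall>k<Suc (length w). (i # p) ! k + (j # q) ! k = (a # w) ! k"
    by (auto simp: coprod_splits_def length_Suc_conv)
  then show "x \<in> (\<lambda>(i, p, q). (i # p, (a - i) # q)) ` ({..a} \<times> coprod_splits w)"
    by (force simp: coprod_splits_def image_iff)
qed (auto simp: coprod_splits_def nth_Cons split: nat.splits)

lemma finite_coprod_splits [simp]: "finite (coprod_splits w)"
  by (induction w) (simp_all add: coprod_splits_Nil coprod_splits_Cons)

lemma coprod_splits_trivial: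
  "(w, replicate (length w) 0) \<in> coprod_splits w" "(replicate (length w) 0, w) \<in> coprod_splits w"
  by (simp_all add: coprod_splits_def)

lemma sum_list_coprod_splits:
  "(p, q) \<in> coprod_splits w \<Longrightarrow> sum_list p + sum_list q = sum_list w"
  by (induction w arbitrary: p q) (auto simp: coprod_splits_Nil coprod_splits_Cons)

lemma coprod_splits_left_zero:
  "(p, q) \<in> coprod_splits w \<Longrightarrow> sum_list p = 0 \<Longrightarrow> p = replicate (length w) 0 \<and> q = w"
  by (induction w arbitrary: p q) (auto simp: coprod_splits_Nil coprod_splits_Cons)

lemma coprod_splits_right_zero:
  "(p, q) \<in> coprod_splits w \<Longrightarrow> sum_list q = 0 \<Longrightarrow> p = w \<and> q = replicate (length w) 0"
  by (induction w arbitrary: p q) (auto simp: coprod_splits_Nil coprod_splits_Cons)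

definition split_sum :: "nat list \<Rightarrow> (nat list \<Rightarrow> nat list \<Rightarrow> 'a::comm_monoid_add) \<Rightarrow> 'a" where
  "split_sum w g = (\<Sum>(p, q)\<in>coprod_splits w. g p q)"

lemma split_sum_Nil [simp]: "split_sum [] g = g [] []"
  by (simp add: split_sum_def coprod_splits_Nil)

lemma split_sum_Cons:
  "split_sum (a # w) g = (\<Sum>i\<le>a. split_sum w (\<lambda>p q. g (i # p) ((a - i) # q)))"
  unfolding split_sum_def coprod_splits_Cons
  by (subst sum.reindex) (auto simp: inj_on_def sum.cartesian_product case_prod_unfold)

lemma split_sum_append:
  "split_sum (s @ t) g = split_sum s (\<lambda>p1 q1. split_sum t (\<lambda>p2 q2. g (p1 @ p2) (q1 @ q2)))"
  by (induction s arbitrary: g) (simp_all add: split_sum_Cons)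

lemma split_sum_cong:
  "(\<And>p q. (p, q) \<in> coprod_splits w \<Longrightarrow> g p q = h p q) \<Longrightarrow> split_sum w g = split_sum w h"
  unfolding split_sum_def by (rule sum.cong) auto

lemma split_sum_sum: "split_sum w (\<lambda>p q. \<Sum>x\<in>A. f x p q) = (\<Sum>x\<in>A. split_sum w (f x))"
  unfolding split_sum_def by (simp add: case_prod_unfold sum.swap[of _ A])

lemma split_sum_mult_left:
  "split_sum w (\<lambda>p q. (c::'a::semiring_0) * f p q) = c * split_sum w f"
  unfolding split_sum_def by (simp add: case_prod_unfold sum_distrib_left)

lemma split_sum_swap:
  "split_sum s (\<lambda>p q. split_sum t (K p q)) = split_sum t (\<lambda>a b. split_sum s (\<lambda>p q. K p q a b))"
  unfolding split_sum_def by (simp add: case_prod_unfold sum.swap[of _ "coprod_splits s"])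

lemma split_sum_single:
  assumes "(p0, q0) \<in> coprod_splits w"
    and "\<And>p q. (p, q) \<in> coprod_splits w \<Longrightarrow> (p, q) \<noteq> (p0, q0) \<Longrightarrow> g p q = 0"
  shows "split_sum w g = g p0 q0"
proof -
  have "(\<Sum>(p, q)\<in>coprod_splits w - {(p0, q0)}. g p q) = 0"
    using assms(2) by (intro sum.neutral) auto
  then show ?thesis
    unfolding split_sum_def using assms(1) by (simp add: sum.remove)
qed

lemma split_sum_nonzero: "split_sum w g \<noteq> 0 \<Longrightarrow> \<exists>(p, q)\<in>coprod_splits w. g p q \<noteq> 0"
  unfolding split_sum_def by (erule sum.not_neutral_contains_not_neutral) (auto split: prod.splits)

lemma split_sum_coassoc:
  "split_sum w (\<lambda>p q. split_sum p (\<lambda>a b. G a b q))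
   = split_sum w (\<lambda>a t. split_sum t (\<lambda>b c. G a b c))"
proof (induction w arbitrary: G)
  case Nil
  then show ?case by simp
next
  case (Cons x w)
  define F where
    "F j k = split_sum w (\<lambda>a t. split_sum t (\<lambda>b c. G (j # a) (k # b) ((x - j - k) # c)))" for j k
  have "split_sum (x # w) (\<lambda>p q. split_sum p (\<lambda>a b. G a b q))
      = (\<Sum>i\<le>x. \<Sum>j\<le>i. split_sum w (\<lambda>p q. split_sum p (\<lambda>a b. G (j # a) ((i - j) # b) ((x - i) # q))))"
    by (simp add: split_sum_Cons split_sum_sum)
  also have "\<dots> = (\<Sum>i\<le>x. \<Sum>j\<le>i. F j (i - j))"
    by (intro sum.cong refl) (simp add: F_def Cons.IH)
  also have "\<dots> = (\<Sum>(j, k)\<in>{(j, k). j + k \<le> x}. F j k)"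
    by (rule sum.triangle_reindex_eq[symmetric])
  also have "\<dots> = (\<Sum>j\<le>x. \<Sum>k\<le>x - j. F j k)"
    by (subst sum.Sigma) (auto intro!: sum.cong)
  also have "\<dots> = split_sum (x # w) (\<lambda>a t. split_sum t (\<lambda>b c. G a b c))"
    by (simp add: split_sum_Cons split_sum_sum F_def)
  finally show ?case .
qed

lemma sum_list_removeAll_0 [simp]: "sum_list (removeAll 0 xs) = (sum_list xs :: nat)"
  by (induction xs) auto

lemma removeAll_replicate_self [simp]: "removeAll x (replicate n x) = []"
  by (induction n) auto

text \<open>
  Deleting the letters 0 realises Z_0 = 1: id_pi_sum w g sums g u m over the terms u \<otimes> m of
  (id \<otimes> \<pi>)\<Delta>(Z_w), counted with multiplicity.
\<close>
definition id_pi_sum :: "nat list \<Rightarrow> (nat list \<Rightarrow> nat multiset \<Rightarrow> 'a::comm_monoid_add) \<Rightarrow> 'a" where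
  "id_pi_sum w g = split_sum w (\<lambda>p q. g (removeAll 0 p) (mset (removeAll 0 q)))"

definition id_pi_coeff :: "nat list \<Rightarrow> nat list \<Rightarrow> nat multiset \<Rightarrow> int" where
  "id_pi_coeff w u m = id_pi_sum w (\<lambda>u' m'. of_bool (u' = u \<and> m' = m))"

lemma id_pi_sum_cong:
  assumes "\<And>p q. (p, q) \<in> coprod_splits w \<Longrightarrow>
             g (removeAll 0 p) (mset (removeAll 0 q)) = h (removeAll 0 p) (mset (removeAll 0 q))"
  shows "id_pi_sum w g = id_pi_sum w h"
  unfolding id_pi_sum_def using assms by (rule split_sum_cong)

lemma id_pi_sum_append:
  "id_pi_sum (s @ t) g = id_pi_sum s (\<lambda>u1 m1. id_pi_sum t (\<lambda>u2 m2. g (u1 @ u2) (m1 + m2)))"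
  unfolding id_pi_sum_def split_sum_append by simp

lemma id_pi_sum_removeAll_0: "id_pi_sum (removeAll 0 w) g = id_pi_sum w g"
proof (induction w arbitrary: g)
  case (Cons a w)
  have "id_pi_sum (a # w) g = id_pi_sum [a] (\<lambda>u1 m1. id_pi_sum w (\<lambda>u2 m2. g (u1 @ u2) (m1 + m2)))"
    using id_pi_sum_append[of "[a]"] by simp
  also have "\<dots> = id_pi_sum [a] (\<lambda>u1 m1. id_pi_sum (removeAll 0 w) (\<lambda>u2 m2. g (u1 @ u2) (m1 + m2)))"
    by (simp add: Cons.IH)
  also have "\<dots> = id_pi_sum (removeAll 0 (a # w)) g"
    using id_pi_sum_append[of "[a]" "removeAll 0 w" g]
    by (cases "a = 0") (simp_all add: id_pi_sum_def split_sum_Cons)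
  finally show ?case ..
qed simp

lemma id_pi_sum_counit:
  assumes "0 \<notin> set w"
  shows "id_pi_sum w (\<lambda>u m. if m = {#} then g u else 0) = g w"
  unfolding id_pi_sum_def
proof (subst split_sum_single[OF coprod_splits_trivial(1)])
  fix p q assume "(p, q) \<in> coprod_splits w" "(p, q) \<noteq> (w, replicate (length w) 0)"
  then have "sum_list q \<noteq> 0"
    using coprod_splits_right_zero by fastforce
  then have "removeAll 0 q \<noteq> []"
    by (metis sum_list_removeAll_0 sum_list.Nil)
  then show "(if mset (removeAll 0 q) = {#} then g (removeAll 0 p) else 0) = 0"
    by simp
qed (use assms in simp)

lemma id_pi_sum_top:
  assumes "0 \<notin> set w"
  shows "id_pi_sum w (\<lambda>u m. if sum_list w \<le> sum_mset m then g u m else 0) = g [] (mset w)"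
  unfolding id_pi_sum_def
proof (subst split_sum_single[OF coprod_splits_trivial(2)])
  fix p q assume "(p, q) \<in> coprod_splits w" "(p, q) \<noteq> (replicate (length w) 0, w)"
  then have "sum_list q < sum_list w"
    using coprod_splits_left_zero sum_list_coprod_splits by fastforce
  then show "(if sum_list w \<le> sum_mset (mset (removeAll 0 q))
              then g (removeAll 0 p) (mset (removeAll 0 q)) else 0) = 0"
    by (simp add: sum_mset_sum_list)
qed (use assms in \<open>simp add: sum_mset_sum_list\<close>)

lemma id_pi_coprod_eq_coeff: "id_pi_coprod x (u, m) = (\<Sum>w\<in>supp x. x w * id_pi_coeff w u m)"
proof -
  have "int (card {(p, q) \<in> coprod_splits w.
                filter (\<lambda>i. i \<noteq> 0) p = u \<and> mset (filter (\<lambda>i. i \<noteq> 0) q) = m})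
      = id_pi_coeff w u m" for w
    by (simp add: id_pi_coeff_def id_pi_sum_def split_sum_def of_bool_def sum.If_cases
        case_prod_unfold removeAll_filter_not_eq eq_commute Int_def)
  then show ?thesis
    by (simp add: id_pi_coprod_def)
qed

lemma id_pi_coprod_eq:
  assumes "finite V" "supp x \<subseteq> V"
  shows "id_pi_coprod x (u, m) = (\<Sum>w\<in>V. x w * id_pi_coeff w u m)"
  unfolding id_pi_coprod_eq_coeff using assms
  by (auto simp: supp_def intro: sum.mono_neutral_left)

lemma id_pi_coeff_nonzero:
  "id_pi_coeff w u m \<noteq> 0 \<Longrightarrow> \<exists>(p, q)\<in>coprod_splits w. removeAll 0 p = u \<and> mset (removeAll 0 q) = m"
  unfolding id_pi_coeff_def id_pi_sum_def by (fastforce dest: split_sum_nonzero)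

lemma id_pi_coeff_degree: "id_pi_coeff w u m \<noteq> 0 \<Longrightarrow> sum_mset m \<le> sum_list w"
  by (force dest!: id_pi_coeff_nonzero sum_list_coprod_splits simp: sum_mset_sum_list)

lemma id_pi_coprod_zero_letter: "0 \<in># m \<Longrightarrow> id_pi_coprod x (u, m) = 0"
  unfolding id_pi_coprod_eq_coeff by (force dest: id_pi_coeff_nonzero intro: sum.neutral)

lemma id_pi_coprod_counit:
  assumes "x \<in> nsym"
  shows "id_pi_coprod x (u, {#}) = x u"
proof -
  have "id_pi_coeff w u {#} = of_bool (w = u)" if "w \<in> supp x" for w
  proof -
    have "id_pi_coeff w u {#} = id_pi_sum w (\<lambda>u' m'. if m' = {#} then of_bool (u' = u) else 0)"
      unfolding id_pi_coeff_def by (intro id_pi_sum_cong) simp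
    also have "\<dots> = of_bool (w = u)"
      using that assms by (intro id_pi_sum_counit) (auto simp: nsym_def supp_def)
    finally show ?thesis .
  qed
  then have "id_pi_coprod x (u, {#}) = (\<Sum>w\<in>supp x. if w = u then x u else 0)"
    using assms by (auto simp: id_pi_coprod_eq nsym_def intro!: sum.cong)
  also have "\<dots> = x u"
    using assms by (auto simp: nsym_def supp_def)
  finally show ?thesis .
qed

lemma id_pi_sum_expand:
  assumes "finite A"
    and "\<And>p q. (p, q) \<in> coprod_splits w \<Longrightarrow> (removeAll 0 p, mset (removeAll 0 q)) \<notin> A \<Longrightarrow>
           g (removeAll 0 p) (mset (removeAll 0 q)) = 0"
  shows "id_pi_sum w g = (\<Sum>(u, m)\<in>A. g u m * id_pi_coeff w u m)"
proof -
  have "(\<Sum>(u, m)\<in>A. g u m * of_bool (u' = u \<and> m' = m))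
      = (\<Sum>x\<in>A. if x = (u', m') then g u' m' else 0)" for u' m'
    by (rule sum.cong) auto
  then have delta: "(\<Sum>(u, m)\<in>A. g u m * of_bool (u' = u \<and> m' = m))
      = (if (u', m') \<in> A then g u' m' else 0)" for u' m'
    using assms(1) by simp
  have "(\<Sum>(u, m)\<in>A. g u m * id_pi_coeff w u m)
      = id_pi_sum w (\<lambda>u' m'. \<Sum>(u, m)\<in>A. g u m * of_bool (u' = u \<and> m' = m))"
    by (simp add: id_pi_coeff_def id_pi_sum_def split_sum_sum split_sum_mult_left case_prod_unfold)
  also have "\<dots> = id_pi_sum w g"
    unfolding delta using assms(2) by (intro id_pi_sum_cong) auto
  finally show ?thesis ..
qed

section \<open>Coassociativity and cocommutativity\<close>

definition pi_pi_sum :: "nat list \<Rightarrow> (nat multiset \<Rightarrow> nat multiset \<Rightarrow> 'a::comm_monoid_add) \<Rightarrow> 'a" where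
  "pi_pi_sum w H = id_pi_sum w (\<lambda>u m. H (mset u) m)"

lemma pi_pi_sum_append:
  "pi_pi_sum (s @ t) H = id_pi_sum s (\<lambda>u1 m1. pi_pi_sum t (\<lambda>M m2. H (mset u1 + M) (m1 + m2)))"
  by (simp add: pi_pi_sum_def id_pi_sum_append)

lemma pi_pi_sum_append_commute: "pi_pi_sum (s @ t) H = pi_pi_sum (t @ s) H"
  unfolding pi_pi_sum_def id_pi_sum_append unfolding id_pi_sum_def
  by (subst split_sum_swap) (simp add: add.commute)

text \<open>Cocommutativity of Sym.\<close>
lemma pi_pi_sum_perm: "mset t = mset t' \<Longrightarrow> pi_pi_sum t H = pi_pi_sum t' H"
proof (induction t arbitrary: t' H)
  case (Cons a t)
  then obtain xs ys where t': "t' = xs @ a # ys"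
    by (metis list.set_intros(1) set_mset_mset split_list)
  then have "mset t = mset (ys @ xs)"
    using Cons.prems by simp
  then have "pi_pi_sum ([a] @ t) H = pi_pi_sum ([a] @ ys @ xs) H"
    by (simp only: pi_pi_sum_append Cons.IH)
  also have "\<dots> = pi_pi_sum t' H"
    using pi_pi_sum_append_commute[of "a # ys" xs H] by (simp add: t')
  finally show ?case by simp
qed simp

lemma sum_list_sorted_list_of_multiset [simp]: "sum_list (sorted_list_of_multiset M) = sum_mset M"
  by (metis mset_sorted_list_of_multiset sum_mset_sum_list)

text \<open>The coefficient of m1 \<otimes> m2 in the coproduct of the monomial M of Sym.\<close>
definition sym_coprod_coeff :: "nat multiset \<Rightarrow> nat multiset \<Rightarrow> nat multiset \<Rightarrow> int" where
  "sym_coprod_coeff M m1 m2 =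
     pi_pi_sum (sorted_list_of_multiset M) (\<lambda>B C. of_bool (B = m1 \<and> C = m2))"

lemma split_sum_eq_sym_coprod_coeff:
  "split_sum t (\<lambda>b c. of_bool (mset (removeAll 0 b) = m1 \<and> mset (removeAll 0 c) = m2))
   = sym_coprod_coeff (mset (removeAll 0 t)) m1 m2"
proof -
  have "split_sum t (\<lambda>b c. of_bool (mset (removeAll 0 b) = m1 \<and> mset (removeAll 0 c) = m2))
      = pi_pi_sum (removeAll 0 t) (\<lambda>B C. of_bool (B = m1 \<and> C = m2))"
    by (simp add: pi_pi_sum_def id_pi_sum_removeAll_0) (simp add: id_pi_sum_def)
  also have "\<dots> = sym_coprod_coeff (mset (removeAll 0 t)) m1 m2"
    unfolding sym_coprod_coeff_def by (rule pi_pi_sum_perm) simp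
  finally show ?thesis .
qed

lemma sym_coprod_coeff_degree:
  assumes "sym_coprod_coeff M m1 m2 \<noteq> 0" "m1 \<noteq> {#}"
  shows "sum_mset m2 < sum_mset M"
proof -
  obtain b c where bc: "(b, c) \<in> coprod_splits (sorted_list_of_multiset M)"
    "mset (removeAll 0 b) = m1" "mset (removeAll 0 c) = m2"
    using split_sum_nonzero assms(1)
    by (fastforce simp: sym_coprod_coeff_def pi_pi_sum_def id_pi_sum_def)
  then have "sum_list b \<noteq> 0"
    using assms(2) by (auto simp: removeAll_filter_not_eq filter_empty_conv)
  moreover have "sum_mset m2 = sum_list c"
    using bc(3) by (metis sum_list_removeAll_0 sum_mset_sum_list)
  moreover have "sum_list b + sum_list c = sum_mset M"
    using sum_list_coprod_splits[OF bc(1)] by simp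
  ultimately show ?thesis
    by linarith
qed

text \<open>
  Both sides compute the coefficients of (id \<otimes> \<pi> \<otimes> \<pi>)(\<Delta> \<otimes> id)\<Delta> = (id \<otimes> \<pi> \<otimes> \<pi>)(id \<otimes> \<Delta>)\<Delta>
  on Z_w; the right factor is evaluated in Sym by cocommutativity.
\<close>
lemma id_pi_coeff_coassoc:
  "id_pi_sum w (\<lambda>u m2. of_bool (m2 = m) * id_pi_coeff u v m1)
   = id_pi_sum w (\<lambda>u M. of_bool (u = v) * sym_coprod_coeff M m1 m)"
proof -
  let ?B = "\<lambda>P. of_bool P :: int"
  have "id_pi_coeff (removeAll 0 p) v m1
      = split_sum p (\<lambda>a b. ?B (removeAll 0 a = v \<and> mset (removeAll 0 b) = m1))" for p
    by (simp add: id_pi_coeff_def id_pi_sum_removeAll_0) (simp add: id_pi_sum_def)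
  then have "id_pi_sum w (\<lambda>u m2. of_bool (m2 = m) * id_pi_coeff u v m1)
      = split_sum w (\<lambda>p q. split_sum p (\<lambda>a b.
          ?B (mset (removeAll 0 q) = m) * ?B (removeAll 0 a = v \<and> mset (removeAll 0 b) = m1)))"
    by (simp add: id_pi_sum_def split_sum_mult_left)
  also have "\<dots> = split_sum w (\<lambda>a t. split_sum t (\<lambda>b c.
          ?B (mset (removeAll 0 c) = m) * ?B (removeAll 0 a = v \<and> mset (removeAll 0 b) = m1)))"
    by (rule split_sum_coassoc)
  also have "\<dots> = split_sum w (\<lambda>a t. ?B (removeAll 0 a = v) *
          split_sum t (\<lambda>b c. ?B (mset (removeAll 0 b) = m1 \<and> mset (removeAll 0 c) = m)))"
    by (simp only: split_sum_mult_left[symmetric]) (intro split_sum_cong, auto)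
  also have "\<dots> = id_pi_sum w (\<lambda>u M. of_bool (u = v) * sym_coprod_coeff M m1 m)"
    by (simp add: id_pi_sum_def split_sum_eq_sym_coprod_coeff)
  finally show ?thesis .
qed

lemma supp_id_pi_coprod_slice:
  "supp (\<lambda>u. id_pi_coprod x (u, m)) \<subseteq> (\<Union>w\<in>supp x. (\<lambda>(p, q). removeAll 0 p) ` coprod_splits w)"
proof
  fix u assume "u \<in> supp (\<lambda>u. id_pi_coprod x (u, m))"
  then obtain w where "w \<in> supp x" "id_pi_coeff w u m \<noteq> 0"
    by (auto simp: supp_def id_pi_coprod_eq_coeff elim: sum.not_neutral_contains_not_neutral)
  then show "u \<in> (\<Union>w\<in>supp x. (\<lambda>(p, q). removeAll 0 p) ` coprod_splits w)"
    by (force dest: id_pi_coeff_nonzero)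
qed

lemma id_pi_coprod_slice_nsym:
  assumes "x \<in> nsym"
  shows "(\<lambda>u. id_pi_coprod x (u, m)) \<in> nsym"
proof -
  have "finite (\<Union>w\<in>supp x. (\<lambda>(p, q). removeAll 0 p) ` coprod_splits w)"
    using assms by (simp add: nsym_def)
  then show ?thesis
    using supp_id_pi_coprod_slice[of x m] unfolding nsym_def
    by (auto intro: finite_subset simp: supp_def)
qed

lemma id_pi_coeff_compose:
  assumes "finite U" "\<And>p q. (p, q) \<in> coprod_splits w \<Longrightarrow> removeAll 0 p \<in> U"
    and "finite MM" "\<And>p q. (p, q) \<in> coprod_splits w \<Longrightarrow> mset (removeAll 0 q) \<in> MM"
  shows "(\<Sum>u\<in>U. id_pi_coeff u v m1 * id_pi_coeff w u m)
       = (\<Sum>M\<in>MM. sym_coprod_coeff M m1 m * id_pi_coeff w v M)"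
proof -
  have "(\<Sum>u\<in>U. id_pi_coeff u v m1 * id_pi_coeff w u m)
      = id_pi_sum w (\<lambda>u m2. of_bool (m2 = m) * id_pi_coeff u v m1)"
    using assms(1,2) by (subst id_pi_sum_expand[where A = "U \<times> {m}"])
      (auto simp: sum.cartesian_product[symmetric])
  also have "\<dots> = id_pi_sum w (\<lambda>u M. of_bool (u = v) * sym_coprod_coeff M m1 m)"
    by (rule id_pi_coeff_coassoc)
  also have "\<dots> = (\<Sum>M\<in>MM. sym_coprod_coeff M m1 m * id_pi_coeff w v M)"
    using assms(3,4) by (subst id_pi_sum_expand[where A = "{v} \<times> MM"])
      (auto simp: sum.cartesian_product[symmetric])
  finally show ?thesis .
qed

lemma top_slice_cotensor:
  assumes x: "x \<in> nsym"
    and top: "\<And>v M. sum_mset m < sum_mset M \<Longrightarrow> id_pi_coprod x (v, M) = 0"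
  shows "(\<lambda>u. id_pi_coprod x (u, m)) \<in> cotensor"
proof -
  define y where "y = (\<lambda>u. id_pi_coprod x (u, m))"
  define U where "U = (\<Union>w\<in>supp x. (\<lambda>(p, q). removeAll 0 p) ` coprod_splits w)"
  define MM where "MM = (\<Union>w\<in>supp x. (\<lambda>(p, q). mset (removeAll 0 q)) ` coprod_splits w)"
  have "finite U" "finite MM"
    using x by (simp_all add: U_def MM_def nsym_def)
  have y: "y \<in> nsym"
    unfolding y_def using x by (rule id_pi_coprod_slice_nsym)
  have "id_pi_coprod y (v, m') = 0" if "m' \<noteq> {#}" for v m'
  proof -
    have coassoc: "(\<Sum>u\<in>U. id_pi_coeff u v m' * id_pi_coeff w u m)
        = (\<Sum>M\<in>MM. sym_coprod_coeff M m' m * id_pi_coeff w v M)" if "w \<in> supp x" for w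
      using that \<open>finite U\<close> \<open>finite MM\<close> by (intro id_pi_coeff_compose) (force simp: U_def MM_def)+
    have "id_pi_coprod y (v, m') = (\<Sum>u\<in>U. y u * id_pi_coeff u v m')"
      using \<open>finite U\<close> supp_id_pi_coprod_slice[of x m]
      by (intro id_pi_coprod_eq) (simp_all add: U_def y_def)
    also have "\<dots> = (\<Sum>u\<in>U. \<Sum>w\<in>supp x. x w * (id_pi_coeff u v m' * id_pi_coeff w u m))"
      by (simp add: y_def id_pi_coprod_eq_coeff sum_distrib_left mult_ac)
    also have "\<dots> = (\<Sum>w\<in>supp x. \<Sum>M\<in>MM. sym_coprod_coeff M m' m * (x w * id_pi_coeff w v M))"
      by (subst sum.swap) (simp add: coassoc sum_distrib_left[symmetric] mult.left_commute)
    also have "\<dots> = (\<Sum>M\<in>MM. sym_coprod_coeff M m' m * id_pi_coprod x (v, M))"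
      by (subst sum.swap) (simp add: id_pi_coprod_eq_coeff sum_distrib_left)
    also have "\<dots> = 0"
      using top sym_coprod_coeff_degree[OF _ that] by (intro sum.neutral) force
    finally show ?thesis .
  qed
  then show ?thesis
    using y id_pi_coprod_counit[OF y] by (auto simp: cotensor_def y_def)
qed

section \<open>Left multiplication by a monomial\<close>

lemma nmult_mono:
  "nmult (mono s) c w = (if take (length s) w = s then c (drop (length s) w) else 0)"
proof -
  have "nmult (mono s) c w = (\<Sum>k\<le>length w. if k = length s \<and> take (length s) w = s
                                then c (drop (length s) w) else 0)"
    unfolding nmult_def mono_def by (rule sum.cong) auto
  then show ?thesis
    by auto
qed

lemma supp_nmult_mono: "supp (nmult (mono s) c) = (\<lambda>v. s @ v) ` supp c"
  by (auto simp: supp_def nmult_mono image_iff split: if_splits) (metis append_take_drop_id)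

lemma nmult_mono_nsym:
  assumes "0 \<notin> set s" "c \<in> nsym"
  shows "nmult (mono s) c \<in> nsym"
proof -
  have "0 \<notin> set w" if w: "w \<in> supp (nmult (mono s) c)" for w
  proof -
    obtain v where "w = s @ v" "c v \<noteq> 0"
      using w unfolding supp_nmult_mono by (auto simp: supp_def)
    then show ?thesis
      using assms by (auto simp: nsym_def)
  qed
  moreover have "finite (supp (nmult (mono s) c))"
    using assms(2) by (simp add: supp_nmult_mono nsym_def)
  ultimately show ?thesis
    by (auto simp: nsym_def supp_def)
qed

lemma id_pi_coprod_nmult_mono:
  "id_pi_coprod (nmult (mono s) c) (u, m) = (\<Sum>v\<in>supp c. c v * id_pi_coeff (s @ v) u m)"
  unfolding id_pi_coprod_eq_coeff supp_nmult_mono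
  by (subst sum.reindex) (auto simp: inj_on_def nmult_mono)

lemma id_pi_coprod_nmult_mono_top:
  assumes c: "c \<in> cotensor" and s: "0 \<notin> set s" and deg: "sum_list s \<le> sum_mset m"
  shows "id_pi_coprod (nmult (mono s) c) (u, m) = (if m = mset s then c u else 0)"
proof -
  let ?P = "\<lambda>u1 m1. take (length u1) u = u1 \<and> m1 \<subseteq># m"
  have append_split: "(of_bool (u1 @ u2 = u \<and> m1 + m2 = m) :: int)
      = of_bool (?P u1 m1) * of_bool (u2 = drop (length u1) u \<and> m2 = m - m1)" for u1 u2 m1 m2
    by (auto simp: append_eq_conv_conj) (metis mset_subset_eq_add_left)
  have coeff: "id_pi_coeff (s @ v) u m
      = id_pi_sum s (\<lambda>u1 m1. of_bool (?P u1 m1) * id_pi_coeff v (drop (length u1) u) (m - m1))"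
    for v
    unfolding id_pi_coeff_def id_pi_sum_append append_split
    by (simp add: id_pi_sum_def split_sum_mult_left)
  have "id_pi_coprod (nmult (mono s) c) (u, m)
      = (\<Sum>v\<in>supp c. id_pi_sum s (\<lambda>u1 m1.
           of_bool (?P u1 m1) * (c v * id_pi_coeff v (drop (length u1) u) (m - m1))))"
    by (simp add: id_pi_coprod_nmult_mono coeff id_pi_sum_def split_sum_mult_left[symmetric]
        mult.left_commute)
  also have "\<dots> = id_pi_sum s (\<lambda>u1 m1.
                    of_bool (?P u1 m1) * id_pi_coprod c (drop (length u1) u, m - m1))"
    by (simp add: id_pi_sum_def split_sum_sum[symmetric] id_pi_coprod_eq_coeff sum_distrib_left)
  also have "\<dots> = id_pi_sum s (\<lambda>u1 m1. if sum_list s \<le> sum_mset m1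
                  then of_bool (take (length u1) u = u1 \<and> m1 = m) * c (drop (length u1) u) else 0)"
    using c deg
    by (intro id_pi_sum_cong) (auto simp: cotensor_def Diff_eq_empty_iff_mset subset_mset.antisym)
  also have "\<dots> = of_bool (mset s = m) * c u"
    using id_pi_sum_top[OF s,
        of "\<lambda>u1 m1. of_bool (take (length u1) u = u1 \<and> m1 = m) * c (drop (length u1) u)"]
    by simp
  finally show ?thesis
    by auto
qed

lemma supp_add_subset: "supp (\<lambda>w. a w + b w) \<subseteq> supp a \<union> supp (b :: _ \<Rightarrow> 'a::monoid_add)"
  by (auto simp: supp_def)

lemma supp_diff_subset: "supp (\<lambda>w. a w - b w) \<subseteq> supp a \<union> supp (b :: _ \<Rightarrow> 'a::group_add)"
  by (auto simp: supp_def)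

lemma supp_sum_subset: "supp (\<lambda>w. \<Sum>i\<in>I. X i w) \<subseteq> (\<Union>i\<in>I. supp (X i))"
  by (auto simp: supp_def elim: sum.not_neutral_contains_not_neutral)

lemma nsym_add: "a \<in> nsym \<Longrightarrow> b \<in> nsym \<Longrightarrow> (\<lambda>w. a w + b w) \<in> nsym"
  unfolding nsym_def using supp_add_subset[of a b]
  by (auto intro: finite_subset) (metis add.right_neutral)

lemma nsym_diff: "a \<in> nsym \<Longrightarrow> b \<in> nsym \<Longrightarrow> (\<lambda>w. a w - b w) \<in> nsym"
  unfolding nsym_def using supp_diff_subset[of a b]
  by (auto intro: finite_subset) metis

lemma nsym_sum: "finite I \<Longrightarrow> (\<And>i. i \<in> I \<Longrightarrow> X i \<in> nsym) \<Longrightarrow> (\<lambda>w. \<Sum>i\<in>I. X i w) \<in> nsym"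
  unfolding nsym_def using supp_sum_subset[of X I]
  by (auto intro: finite_subset elim!: sum.not_neutral_contains_not_neutral)

lemma id_pi_coprod_add:
  assumes "finite (supp a)" "finite (supp b)"
  shows "id_pi_coprod (\<lambda>w. a w + b w) (u, m) = id_pi_coprod a (u, m) + id_pi_coprod b (u, m)"
  using assms supp_add_subset[of a b]
  by (subst (1 2 3) id_pi_coprod_eq[of "supp a \<union> supp b"]) (auto simp: sum.distrib algebra_simps)

lemma id_pi_coprod_diff:
  assumes "finite (supp a)" "finite (supp b)"
  shows "id_pi_coprod (\<lambda>w. a w - b w) (u, m) = id_pi_coprod a (u, m) - id_pi_coprod b (u, m)"
  using assms supp_diff_subset[of a b]
  by (subst (1 2 3) id_pi_coprod_eq[of "supp a \<union> supp b"]) (auto simp: sum_subtractf algebra_simps)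

lemma id_pi_coprod_sum:
  assumes "finite I" "\<And>i. i \<in> I \<Longrightarrow> finite (supp (X i))"
  shows "id_pi_coprod (\<lambda>w. \<Sum>i\<in>I. X i w) (u, m) = (\<Sum>i\<in>I. id_pi_coprod (X i) (u, m))"
proof -
  define V where "V = (\<Union>i\<in>I. supp (X i))"
  have "finite V"
    using assms by (simp add: V_def)
  have "id_pi_coprod (\<lambda>w. \<Sum>i\<in>I. X i w) (u, m) = (\<Sum>w\<in>V. (\<Sum>i\<in>I. X i w) * id_pi_coeff w u m)"
    using \<open>finite V\<close> supp_sum_subset[of X I] by (intro id_pi_coprod_eq) (simp_all add: V_def)
  also have "\<dots> = (\<Sum>i\<in>I. \<Sum>w\<in>V. X i w * id_pi_coeff w u m)"
    by (simp add: sum_distrib_right sum.swap[of _ V])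
  also have "\<dots> = (\<Sum>i\<in>I. id_pi_coprod (X i) (u, m))"
    using \<open>finite V\<close> by (intro sum.cong refl id_pi_coprod_eq[symmetric]) (auto simp: V_def)
  finally show ?thesis .
qed

lemma zero_cotensor: "(\<lambda>_. 0) \<in> cotensor"
  by (simp add: cotensor_def nsym_def supp_def id_pi_coprod_def)

lemma cotensor_add: "a \<in> cotensor \<Longrightarrow> b \<in> cotensor \<Longrightarrow> (\<lambda>w. a w + b w) \<in> cotensor"
  unfolding cotensor_def using nsym_add[of a b] by (auto simp: id_pi_coprod_add nsym_def)

lemma cotensor_diff: "a \<in> cotensor \<Longrightarrow> b \<in> cotensor \<Longrightarrow> (\<lambda>w. a w - b w) \<in> cotensor"
  unfolding cotensor_def using nsym_diff[of a b] by (auto simp: id_pi_coprod_diff nsym_def)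

lemma symt_tensor_cotensor_add:
  assumes "f \<in> symt_tensor_cotensor" "g \<in> symt_tensor_cotensor"
  shows "(\<lambda>s w. f s w + g s w) \<in> symt_tensor_cotensor"
proof -
  have "{s. (\<lambda>w. f s w + g s w) \<noteq> (\<lambda>_. 0)} \<subseteq> {s. f s \<noteq> (\<lambda>_. 0)} \<union> {s. g s \<noteq> (\<lambda>_. 0)}"
    by auto
  then show ?thesis
    using assms unfolding symt_tensor_cotensor_def by (auto intro: cotensor_add finite_subset)
qed

lemma symt_tensor_cotensor_diff:
  assumes "f \<in> symt_tensor_cotensor" "g \<in> symt_tensor_cotensor"
  shows "(\<lambda>s w. f s w - g s w) \<in> symt_tensor_cotensor"
proof -
  have "{s. (\<lambda>w. f s w - g s w) \<noteq> (\<lambda>_. 0)} \<subseteq> {s. f s \<noteq> (\<lambda>_. 0)} \<union> {s. g s \<noteq> (\<lambda>_. 0)}"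
    by auto
  then show ?thesis
    using assms unfolding symt_tensor_cotensor_def by (auto intro: cotensor_diff finite_subset)
qed

lemma mult_map_eq_sum:
  assumes "finite A" "{s. f s \<noteq> (\<lambda>_. 0)} \<subseteq> A"
  shows "mult_map f w = (\<Sum>s\<in>A. nmult (mono s) (f s) w)"
  unfolding mult_map_def using assms by (intro sum.mono_neutral_left) (auto simp: nmult_mono)

lemma mult_map_add:
  assumes "finite {s. f s \<noteq> (\<lambda>_. 0)}" "finite {s. g s \<noteq> (\<lambda>_. 0)}"
  shows "mult_map (\<lambda>s w. f s w + g s w) w = mult_map f w + mult_map g w"
proof -
  let ?A = "{s. f s \<noteq> (\<lambda>_. 0)} \<union> {s. g s \<noteq> (\<lambda>_. 0)}"
  have "finite ?A"
    using assms by simp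
  have "mult_map (\<lambda>s w. f s w + g s w) w = (\<Sum>s\<in>?A. nmult (mono s) (\<lambda>w. f s w + g s w) w)"
    using \<open>finite ?A\<close> by (rule mult_map_eq_sum) auto
  also have "\<dots> = (\<Sum>s\<in>?A. nmult (mono s) (f s) w) + (\<Sum>s\<in>?A. nmult (mono s) (g s) w)"
    by (subst sum.distrib[symmetric]) (rule sum.cong; simp add: nmult_mono)
  also have "\<dots> = mult_map f w + mult_map g w"
    using mult_map_eq_sum[OF \<open>finite ?A\<close> Un_upper1] mult_map_eq_sum[OF \<open>finite ?A\<close> Un_upper2]
    by simp
  finally show ?thesis .
qed

lemma mult_map_diff:
  assumes "finite {s. f s \<noteq> (\<lambda>_. 0)}" "finite {s. g s \<noteq> (\<lambda>_. 0)}"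
  shows "mult_map (\<lambda>s w. f s w - g s w) w = mult_map f w - mult_map g w"
proof -
  let ?A = "{s. f s \<noteq> (\<lambda>_. 0)} \<union> {s. g s \<noteq> (\<lambda>_. 0)}"
  have "finite ?A"
    using assms by simp
  have "mult_map (\<lambda>s w. f s w - g s w) w = (\<Sum>s\<in>?A. nmult (mono s) (\<lambda>w. f s w - g s w) w)"
    using \<open>finite ?A\<close> by (rule mult_map_eq_sum) auto
  also have "\<dots> = (\<Sum>s\<in>?A. nmult (mono s) (f s) w) - (\<Sum>s\<in>?A. nmult (mono s) (g s) w)"
    by (subst sum_subtractf[symmetric]) (rule sum.cong; simp add: nmult_mono)
  also have "\<dots> = mult_map f w - mult_map g w"
    using mult_map_eq_sum[OF \<open>finite ?A\<close> Un_upper1] mult_map_eq_sum[OF \<open>finite ?A\<close> Un_upper2]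
    by simp
  finally show ?thesis .
qed

lemma mult_map_nsym:
  assumes "f \<in> symt_tensor_cotensor"
  shows "mult_map f \<in> nsym"
  unfolding mult_map_def using assms
  by (intro nsym_sum nmult_mono_nsym)
    (auto simp: symt_tensor_cotensor_def symt_basis_def cotensor_def)

lemma id_pi_coprod_mult_map:
  assumes "finite A" "{s. f s \<noteq> (\<lambda>_. 0)} \<subseteq> A" "\<And>s. f s \<in> nsym"
  shows "id_pi_coprod (mult_map f) (u, m) = (\<Sum>s\<in>A. id_pi_coprod (nmult (mono s) (f s)) (u, m))"
proof -
  have "mult_map f = (\<lambda>w. \<Sum>s\<in>A. nmult (mono s) (f s) w)"
    using mult_map_eq_sum[OF assms(1,2)] by blast
  then show ?thesis
    using assms by (simp add: id_pi_coprod_sum supp_nmult_mono nsym_def)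
qed

section \<open>Injectivity\<close>

lemma sorted_mset_eq: "sorted xs \<Longrightarrow> sorted ys \<Longrightarrow> mset xs = mset ys \<Longrightarrow> xs = ys"
  by (metis sorted_list_of_multiset_mset sorted_sort_id)

lemma mult_map_eq_0D:
  assumes f: "f \<in> symt_tensor_cotensor" and zero: "mult_map f = (\<lambda>_. 0)"
  shows "f s = (\<lambda>_. 0)"
proof (rule ccontr)
  assume "f s \<noteq> (\<lambda>_. 0)"
  define D where "D = {s. f s \<noteq> (\<lambda>_. 0)}"
  have "finite D"
    using f by (simp add: D_def symt_tensor_cotensor_def)
  have "s \<in> D"
    using \<open>f s \<noteq> (\<lambda>_. 0)\<close> by (simp add: D_def)
  then obtain s0 where s0: "s0 \<in> D" "\<And>s. s \<in> D \<Longrightarrow> sum_list s \<le> sum_list s0"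
    using ex_has_greatest_nat[of "\<lambda>s. s \<in> D" s sum_list "Suc (\<Sum>s\<in>D. sum_list s)"] \<open>finite D\<close>
    by (auto simp: le_imp_less_Suc member_le_sum)
  have basis: "s \<in> symt_basis" if "s \<in> D" for s
    using f that by (auto simp: D_def symt_tensor_cotensor_def)
  have cot: "f s \<in> cotensor" for s
    using f by (simp add: symt_tensor_cotensor_def)
  have "f s0 u = 0" for u
  proof -
    have "0 = id_pi_coprod (mult_map f) (u, mset s0)"
      by (simp add: zero id_pi_coprod_def supp_def)
    also have "\<dots> = (\<Sum>s\<in>D. id_pi_coprod (nmult (mono s) (f s)) (u, mset s0))"
      using \<open>finite D\<close> cot by (intro id_pi_coprod_mult_map) (auto simp: D_def cotensor_def)
    also have "\<dots> = (\<Sum>s\<in>D. if s = s0 then f s0 u else 0)"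
    proof (intro sum.cong refl)
      fix s assume "s \<in> D"
      then have "id_pi_coprod (nmult (mono s) (f s)) (u, mset s0)
          = (if mset s0 = mset s then f s u else 0)"
        using basis[OF \<open>s \<in> D\<close>] cot s0(2)[OF \<open>s \<in> D\<close>]
        by (intro id_pi_coprod_nmult_mono_top) (simp_all add: symt_basis_def sum_mset_sum_list)
      also have "mset s0 = mset s \<longleftrightarrow> s = s0"
        using basis[OF \<open>s \<in> D\<close>] basis[OF s0(1)] sorted_mset_eq[of s0 s]
        by (auto simp: symt_basis_def)
      finally show "id_pi_coprod (nmult (mono s) (f s)) (u, mset s0)
          = (if s = s0 then f s0 u else 0)"
        by simp
    qed
    also have "\<dots> = f s0 u"
      using \<open>finite D\<close> s0(1) by simp
    finally show ?thesis
      by simp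
  qed
  then show False
    using s0(1) by (auto simp: D_def)
qed

lemma inj_on_mult_map: "inj_on mult_map symt_tensor_cotensor"
proof (rule inj_onI)
  fix f g assume f: "f \<in> symt_tensor_cotensor" and g: "g \<in> symt_tensor_cotensor"
    and eq: "mult_map f = mult_map g"
  have fin: "finite {s. f s \<noteq> (\<lambda>_. 0)}" "finite {s. g s \<noteq> (\<lambda>_. 0)}"
    using f g by (simp_all add: symt_tensor_cotensor_def)
  have "mult_map (\<lambda>s w. f s w - g s w) = (\<lambda>_. 0)"
    using eq by (simp add: fun_eq_iff mult_map_diff[OF fin])
  then have "(\<lambda>w. f s w - g s w) = (\<lambda>_. 0)" for s
    by (rule mult_map_eq_0D[OF symt_tensor_cotensor_diff[OF f g]])
  then show "f = g"
    by (simp add: fun_eq_iff)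
qed

section \<open>Surjectivity\<close>

definition coprod_degree_below :: "(nat list \<Rightarrow> int) \<Rightarrow> nat \<Rightarrow> bool" where
  "coprod_degree_below x d \<longleftrightarrow> (\<forall>v M. d \<le> sum_mset M \<longrightarrow> id_pi_coprod x (v, M) = 0)"

lemma ex_coprod_degree_below:
  assumes "x \<in> nsym"
  shows "\<exists>d. coprod_degree_below x d"
proof
  have "finite (supp x)"
    using assms by (simp add: nsym_def)
  show "coprod_degree_below x (Suc (\<Sum>w\<in>supp x. sum_list w))"
    unfolding coprod_degree_below_def id_pi_coprod_eq_coeff
  proof (intro allI impI sum.neutral ballI)
    fix v M w assume "Suc (\<Sum>w\<in>supp x. sum_list w) \<le> sum_mset M" "w \<in> supp x"
    then have "sum_list w < sum_mset M"
      using member_le_sum[of w "supp x" sum_list] \<open>finite (supp x)\<close> by simp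
    then show "x w * id_pi_coeff w v M = 0"
      using id_pi_coeff_degree by fastforce
  qed
qed

lemma coprod_degree_below_0: "x \<in> nsym \<Longrightarrow> coprod_degree_below x 0 \<Longrightarrow> x = (\<lambda>_. 0)"
  by (auto simp: coprod_degree_below_def id_pi_coprod_counit[symmetric])

lemma length_le_sum_list: "0 \<notin> set xs \<Longrightarrow> length xs \<le> sum_list (xs :: nat list)"
  by (induction xs) auto

lemma finite_symt_basis_degree: "finite {s \<in> symt_basis. sum_list s = d}"
proof (rule finite_subset)
  show "{s \<in> symt_basis. sum_list s = d} \<subseteq> {xs. set xs \<subseteq> {..d} \<and> length xs \<le> d}"
    using length_le_sum_list member_le_sum_list by (fastforce simp: symt_basis_def)
qed (rule finite_lists_length_le, simp)

lemma sum_symt_basis_degree_indicator: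
  "(\<Sum>s\<in>{s \<in> symt_basis. sum_list s = d}. if M = mset s then y else 0)
   = (if 0 \<notin># M \<and> sum_mset M = d then y else 0)"
proof -
  have "(\<Sum>s\<in>{s \<in> symt_basis. sum_list s = d}. if M = mset s then y else 0)
      = (\<Sum>s\<in>{s \<in> symt_basis. sum_list s = d}. if s = sorted_list_of_multiset M then y else 0)"
    by (intro sum.cong refl) (auto simp: symt_basis_def sorted_sort_id)
  also have "\<dots> = (if 0 \<notin># M \<and> sum_mset M = d then y else 0)"
    using finite_symt_basis_degree by (simp add: symt_basis_def)
  finally show ?thesis .
qed

lemma reduce_coprod_degree:
  assumes x: "x \<in> nsym" and below: "coprod_degree_below x (Suc d)"
  shows "\<exists>f\<in>symt_tensor_cotensor. coprod_degree_below (\<lambda>w. x w - mult_map f w) d"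
proof -
  define L where "L = {s \<in> symt_basis. sum_list s = d}"
  define f where "f s = (if s \<in> L then (\<lambda>u. id_pi_coprod x (u, mset s)) else (\<lambda>_. 0))" for s
  have "finite L"
    unfolding L_def by (rule finite_symt_basis_degree)
  have top: "id_pi_coprod x (v, M) = 0" if "d < sum_mset M" for v M
    using below that by (simp add: coprod_degree_below_def)
  have f_cot: "f s \<in> cotensor" for s
  proof (cases "s \<in> L")
    case True
    then have "sum_mset (mset s) = d"
      by (simp add: L_def sum_mset_sum_list)
    then show ?thesis
      using top_slice_cotensor[OF x, of "mset s"] top True by (simp add: f_def)
  qed (simp add: f_def zero_cotensor)
  have f: "f \<in> symt_tensor_cotensor"
    using \<open>finite L\<close> f_cot unfolding symt_tensor_cotensor_def
    by (auto simp: f_def L_def intro: finite_subset[of _ L])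
  have "id_pi_coprod (mult_map f) (v, M) = id_pi_coprod x (v, M)" if "d \<le> sum_mset M" for v M
  proof -
    have "id_pi_coprod (mult_map f) (v, M) = (\<Sum>s\<in>L. id_pi_coprod (nmult (mono s) (f s)) (v, M))"
      using \<open>finite L\<close> f_cot by (intro id_pi_coprod_mult_map) (auto simp: f_def cotensor_def)
    also have "\<dots> = (\<Sum>s\<in>L. if M = mset s then id_pi_coprod x (v, M) else 0)"
    proof (intro sum.cong refl)
      fix s assume "s \<in> L"
      then show "id_pi_coprod (nmult (mono s) (f s)) (v, M)
          = (if M = mset s then id_pi_coprod x (v, M) else 0)"
        using f_cot[of s] that by (simp add: f_def L_def symt_basis_def id_pi_coprod_nmult_mono_top)
    qed
    also have "\<dots> = (if 0 \<notin># M \<and> sum_mset M = d then id_pi_coprod x (v, M) else 0)"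
      unfolding L_def by (rule sum_symt_basis_degree_indicator)
    also have "\<dots> = id_pi_coprod x (v, M)"
      using top that id_pi_coprod_zero_letter by auto
    finally show ?thesis .
  qed
  then have "coprod_degree_below (\<lambda>w. x w - mult_map f w) d"
    using x mult_map_nsym[OF f] by (simp add: coprod_degree_below_def id_pi_coprod_diff nsym_def)
  then show ?thesis
    using f by blast
qed

lemma mult_map_surj_below:
  "x \<in> nsym \<Longrightarrow> coprod_degree_below x d \<Longrightarrow> x \<in> mult_map ` symt_tensor_cotensor"
proof (induction d arbitrary: x)
  case 0
  have "(\<lambda>_ _. 0) \<in> symt_tensor_cotensor"
    using zero_cotensor by (simp add: symt_tensor_cotensor_def)
  moreover have "x = mult_map (\<lambda>_ _. 0)"
    using coprod_degree_below_0[OF 0] by (simp add: mult_map_def)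
  ultimately show ?case
    by (intro image_eqI)
next
  case (Suc d)
  obtain f where f: "f \<in> symt_tensor_cotensor"
    and below: "coprod_degree_below (\<lambda>w. x w - mult_map f w) d"
    using reduce_coprod_degree[OF Suc.prems] by blast
  have "(\<lambda>w. x w - mult_map f w) \<in> nsym"
    using Suc.prems(1) mult_map_nsym[OF f] by (rule nsym_diff)
  then have "(\<lambda>w. x w - mult_map f w) \<in> mult_map ` symt_tensor_cotensor"
    using below by (rule Suc.IH)
  then obtain g where g: "(\<lambda>w. x w - mult_map f w) = mult_map g" "g \<in> symt_tensor_cotensor"
    by (rule imageE)
  have fin: "finite {s. f s \<noteq> (\<lambda>_. 0)}" "finite {s. g s \<noteq> (\<lambda>_. 0)}"
    using f g(2) by (simp_all add: symt_tensor_cotensor_def)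
  have "mult_map g w = x w - mult_map f w" for w
    using fun_cong[OF g(1), of w] by simp
  then have "x = mult_map (\<lambda>s w. f s w + g s w)"
    by (simp add: fun_eq_iff mult_map_add[OF fin])
  then show ?case
    using symt_tensor_cotensor_add[OF f g(2)] by (rule image_eqI)
qed

lemma mult_map_surj:
  assumes "x \<in> nsym"
  shows "x \<in> mult_map ` symt_tensor_cotensor"
proof -
  obtain d where "coprod_degree_below x d"
    using ex_coprod_degree_below[OF assms] ..
  with assms show ?thesis
    by (rule mult_map_surj_below)
qed

theorem mainTheorem15:
  shows "bij_betw mult_map symt_tensor_cotensor nsym"
  unfolding bij_betw_def
proof
  show "inj_on mult_map symt_tensor_cotensor"
    by (rule inj_on_mult_map)
  show "mult_map ` symt_tensor_cotensor = nsym"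
    using mult_map_nsym mult_map_surj by auto
qed

end
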